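(* Let $\mathcal{V}$ be the set of sequences $v=(v_j)_{j\in\mathbb{Z}_+}$ in $[1,\infty)$ with $v_0=1$ and $v_n\ge\sum_{j<n}v_j$ for all $n\in\mathbb{N}$, and for $v\in\mathcal{V}$ and $n\in\mathbb{N}$ put $u_n=v_n-\sum_{j<n}v_j$. For each $v\in\mathcal{V}$ there is exactly one hermitian hypergroup deformation $(\mathbb{Z}_+,* )$ of $(\mathbb{Z}_+,<,\max)$ satisfying $(\delta_n*\delta_n)(0)=1/v_n$ for all $n\in\mathbb{Z}_+$. Moreover, for this deformation, writing $\mathcal{L}_n=\{k\in\mathbb{Z}_+:k<n\}$ and $\lambda$ for its Haar measure: (i) $\lambda(n)=v_n$ for $n\in\mathbb{Z}_+$ and $\lambda(n)-\lambda(\mathcal{L}_n)=u_n$ for $n\in\mathbb{N}$; (ii) $\lambda(\mathcal{L}_n)\le\lambda(n)$ for $n\in\mathbb{N}$; (iii) for $n\in\mathbb{N}$: (a) $(\delta_n*\delta_n)(m)=\lambda(m)/\lambda(n)$ for $m<n$; (b) $(\delta_n*\delta_n)(n)=(\lambda(n)-\lambda(\mathcal{L}_n))/\lambda(n)$; (c) $(\delta_n*\delta_n)(m)=0$ for $m>n$; (iv) for $n\in\mathbb{N}$, $\operatorname{spt}(\delta_n*\delta_n)=\mathcal{L}_n$ if $\lambda(n)=\lambda(\mathcal{L}_n)$, and $\operatorname{spt}(\delta_n*\delta_n)=\mathcal{L}_n\cup\{n\}$ if $\lambda(n)>\lambda(\mathcal{L}_n)$.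
   Context: $\mathbb{Z}_+=\{0,1,2,\dots\}$, $\mathbb{N}=\{1,2,\dots\}$. A hermitian hypergroup deformation of $(\mathbb{Z}_+,<,\max)$ means a convolution $*$ on $\mathbb{Z}_+$ (discrete topology) given on point masses by $\delta_m*\delta_n=\delta_{\max\{m,n\}}$ for $m\ne n$ or $m=n=0$, and $\delta_n*\delta_n=q_n$ for $n\ge1$, where $q_n$ is a probability measure with finite support containing $0$, such that $(\mathbb{Z}_+,* )$ is a hermitian discrete hypergroup: $*$ is associative, $0$ is an identity, $\delta_m*\delta_n=\delta_n*\delta_m$, and $0\in\operatorname{spt}(\delta_m*\delta_n)$ iff $m=n$. For a measure $\mu$, $\mu(j)=\mu(\{j\})$. The Haar measure $\lambda$ of such a hermitian discrete hypergroup is normalized by $\lambda(0)=1$; it is given by $\lambda(n)=1/(\delta_n*\delta_n)(0)$ for $n\ne 0$, and $\lambda(A)=\sum_{j\in A}\lambda(j)$. *)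

theory Defs
  imports Complex_Main
begin

text \<open>Finitely supported measures on Z_+ are functions nat => real (point masses).
  A convolution structure on point masses is D :: nat => nat => (nat => real),
  where D m n is the measure delta_m * delta_n.\<close>

definition pmass :: "nat \<Rightarrow> (nat \<Rightarrow> real)" where
  "pmass a = (\<lambda>k. if k = a then 1 else 0)"

definition spt :: "(nat \<Rightarrow> real) \<Rightarrow> nat set" where
  "spt \<mu> = {k. \<mu> k \<noteq> 0}"

definition fin_prob :: "(nat \<Rightarrow> real) \<Rightarrow> bool" where
  "fin_prob \<mu> \<longleftrightarrow> (\<forall>k. 0 \<le> \<mu> k) \<and> finite (spt \<mu>) \<and> (\<Sum>k\<in>spt \<mu>. \<mu> k) = 1"

definition conv :: "(nat \<Rightarrow> nat \<Rightarrow> (nat \<Rightarrow> real)) \<Rightarrow> (nat \<Rightarrow> real) \<Rightarrow> (nat \<Rightarrow> real) \<Rightarrow> (nat \<Rightarrow> real)" where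
  "conv D \<mu> \<nu> = (\<lambda>k. \<Sum>i\<in>spt \<mu>. \<Sum>j\<in>spt \<nu>. \<mu> i * \<nu> j * D i j k)"

definition herm_deformation :: "(nat \<Rightarrow> nat \<Rightarrow> (nat \<Rightarrow> real)) \<Rightarrow> bool" where
  "herm_deformation D \<longleftrightarrow>
     (\<forall>m n. (m \<noteq> n \<or> (m = 0 \<and> n = 0)) \<longrightarrow> D m n = pmass (max m n)) \<and>
     (\<forall>n\<ge>1. fin_prob (D n n) \<and> 0 \<in> spt (D n n)) \<and>
     (\<forall>a b c. conv D (D a b) (pmass c) = conv D (pmass a) (D b c)) \<and>
     (\<forall>n. conv D (pmass 0) (pmass n) = pmass n \<and> conv D (pmass n) (pmass 0) = pmass n) \<and>
     (\<forall>m n. D m n = D n m) \<and>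
     (\<forall>m n. 0 \<in> spt (D m n) \<longleftrightarrow> m = n)"

definition haar :: "(nat \<Rightarrow> nat \<Rightarrow> (nat \<Rightarrow> real)) \<Rightarrow> nat \<Rightarrow> real" where
  "haar D n = (if n = 0 then 1 else 1 / D n n 0)"

definition haar_set :: "(nat \<Rightarrow> nat \<Rightarrow> (nat \<Rightarrow> real)) \<Rightarrow> nat set \<Rightarrow> real" where
  "haar_set D A = (\<Sum>j\<in>A. haar D j)"

end

theory Submission
  imports Defs
begin

text \<open>Associativity evaluated at 0 determines a deformation by its squares:
  for \<open>1 \<le> c \<noteq> n\<close>, comparing (d_n * d_n) * d_c with d_n * d_max(n,c) at 0 gives
  (d_n * d_n)(c) (d_c * d_c)(0) = (d_n * d_n)(0) if c < n, and = 0 if c > n.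
  Hence (d_n * d_n)(c) = v_c / v_n below n, it vanishes above n, and total mass 1
  fixes the mass at n. Conversely these measures define an associative convolution,
  and they are nonnegative exactly because v_n is at least the sum of the v_j, j < n.\<close>

definition square_measure :: "(nat \<Rightarrow> real) \<Rightarrow> nat \<Rightarrow> nat \<Rightarrow> real" where
  "square_measure v n k =
     (if k < n then v k / v n else if k = n then (v n - (\<Sum>j<n. v j)) / v n else 0)"

definition max_deformation :: "(nat \<Rightarrow> real) \<Rightarrow> nat \<Rightarrow> nat \<Rightarrow> nat \<Rightarrow> real" where
  "max_deformation v m n = (if m = n then square_measure v m else pmass (max m n))"

lemma spt_pmass [simp]: "spt (pmass c) = {c}"
  by (auto simp: spt_def pmass_def)

lemma conv_pmass_right: "conv D \<mu> (pmass c) = (\<lambda>k. \<Sum>i\<in>spt \<mu>. \<mu> i * D i c k)"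
  unfolding conv_def spt_pmass by (simp add: pmass_def)

lemma conv_pmass_left: "conv D (pmass a) \<nu> = (\<lambda>k. \<Sum>j\<in>spt \<nu>. \<nu> j * D a j k)"
  unfolding conv_def spt_pmass by (simp add: pmass_def)

lemma conv_pmass_pmass [simp]: "conv D (pmass a) (pmass b) = D a b"
  unfolding conv_def spt_pmass by (simp add: pmass_def)

lemma conv_pmass_commute:
  assumes "\<And>i j. D i j = D j i"
  shows "conv D (pmass a) \<mu> = conv D \<mu> (pmass a)"
  unfolding conv_pmass_left conv_pmass_right using assms by simp

lemma sum_spt_superset:
  assumes "spt \<mu> \<subseteq> A" "finite A"
  shows "(\<Sum>i\<in>spt \<mu>. \<mu> i * g i) = (\<Sum>i\<in>A. \<mu> i * g i)"
  by (rule sum.mono_neutral_left) (use assms in \<open>auto simp: spt_def\<close>)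

lemma conv_pmass_right_superset:
  assumes "spt \<mu> \<subseteq> A" "finite A"
  shows "conv D \<mu> (pmass c) k = (\<Sum>i\<in>A. \<mu> i * D i c k)"
  unfolding conv_pmass_right using sum_spt_superset[OF assms] by simp

lemma spt_square_measure_subset: "spt (square_measure v n) \<subseteq> {..n}"
  by (auto simp: spt_def square_measure_def split: if_splits)

lemma spt_square_measure:
  assumes "\<forall>j. 0 < v j"
  shows "spt (square_measure v n) = {k. k < n} \<union> (if (\<Sum>j<n. v j) = v n then {} else {n})"
  using assms by (auto simp: spt_def square_measure_def less_imp_neq[symmetric] split: if_splits)

lemma sum_atMost_split_at:
  assumes "(c::nat) \<le> n"
  shows "(\<Sum>i\<le>n. f i) = (\<Sum>i<c. f i) + f c + (\<Sum>i\<in>{c<..n}. f i)"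
proof -
  have "{..n} = {..<c} \<union> insert c {c<..n}" using assms by auto
  moreover have "sum f ({..<c} \<union> {c<..n}) = sum f {..<c} + sum f {c<..n}"
    by (rule sum.union_disjoint) auto
  ultimately show ?thesis by (simp add: add_ac)
qed

lemma sum_square_measure:
  assumes "v n > 0"
  shows "(\<Sum>i\<le>n. square_measure v n i) = 1"
proof -
  have "(\<Sum>i<n. square_measure v n i) = (\<Sum>i<n. v i) / v n"
    unfolding sum_divide_distrib by (rule sum.cong) (auto simp: square_measure_def)
  then show ?thesis
    using assms by (simp add: lessThan_Suc_atMost[symmetric] square_measure_def field_simps)
qed

lemma square_measure_zero: "v 0 = 1 \<Longrightarrow> square_measure v 0 = pmass 0"
  by (auto simp: square_measure_def pmass_def fun_eq_iff)

lemma max_deformation_commute: "max_deformation v m n = max_deformation v n m"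
  by (simp add: max_deformation_def max.commute)

lemma conv_square_measure_pmass_above:
  assumes "\<forall>j. 0 < v j" "n < c"
  shows "conv (max_deformation v) (square_measure v n) (pmass c) = pmass c"
proof
  fix k
  have "conv (max_deformation v) (square_measure v n) (pmass c) k
      = (\<Sum>i\<le>n. square_measure v n i) * pmass c k"
    unfolding conv_pmass_right_superset[OF spt_square_measure_subset finite_atMost] sum_distrib_right
    by (rule sum.cong) (use assms in \<open>auto simp: max_deformation_def max_def\<close>)
  then show "conv (max_deformation v) (square_measure v n) (pmass c) k = pmass c k"
    using sum_square_measure assms by simp
qed

lemma conv_square_measure_pmass_below:
  assumes pos: "\<forall>j. 0 < v j" and "c < n"
  shows "conv (max_deformation v) (square_measure v n) (pmass c) = square_measure v n"
proof
  fix k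
  let ?f = "\<lambda>i. square_measure v n i * max_deformation v i c k"
  have split: "conv (max_deformation v) (square_measure v n) (pmass c) k
      = (\<Sum>i<c. ?f i) + square_measure v n c * square_measure v c k + (\<Sum>i\<in>{c<..n}. ?f i)"
    unfolding conv_pmass_right_superset[OF spt_square_measure_subset finite_atMost]
      sum_atMost_split_at[OF less_imp_le[OF \<open>c < n\<close>]]
    by (intro arg_cong2[where f = "(+)"] sum.cong) (auto simp: max_deformation_def max_def)
  have "v n > 0" "v c > 0" using pos by auto
  consider "k < c" | "k = c" | "c < k" by linarith
  then show "conv (max_deformation v) (square_measure v n) (pmass c) k = square_measure v n k"
  proof cases
    case 1
    have "(\<Sum>i<c. ?f i) = 0" "(\<Sum>i\<in>{c<..n}. ?f i) = 0"
      by (rule sum.neutral, use 1 in \<open>auto simp: max_deformation_def pmass_def\<close>)+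
    with 1 \<open>c < n\<close> \<open>v n > 0\<close> \<open>v c > 0\<close> show ?thesis
      unfolding split by (simp add: square_measure_def)
  next
    case 2
    have "(\<Sum>i<c. ?f i) = (\<Sum>i<c. v i) / v n"
      unfolding sum_divide_distrib
      by (rule sum.cong) (use 2 \<open>c < n\<close> in \<open>auto simp: max_deformation_def pmass_def square_measure_def\<close>)
    moreover have "(\<Sum>i\<in>{c<..n}. ?f i) = 0"
      by (rule sum.neutral) (use 2 in \<open>auto simp: max_deformation_def pmass_def\<close>)
    ultimately show ?thesis using 2 \<open>c < n\<close> \<open>v n > 0\<close> \<open>v c > 0\<close>
      unfolding split by (simp add: square_measure_def field_simps)
  next
    case 3
    have "(\<Sum>i<c. ?f i) = 0"
      by (rule sum.neutral) (use 3 in \<open>auto simp: max_deformation_def pmass_def\<close>)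
    moreover have "(\<Sum>i\<in>{c<..n}. ?f i) = (\<Sum>i\<in>{c<..n}. if i = k then square_measure v n k else 0)"
      by (rule sum.cong) (use 3 in \<open>auto simp: max_deformation_def pmass_def max_def\<close>)
    ultimately show ?thesis
      using 3 unfolding split by (simp add: square_measure_def)
  qed
qed

lemma max_deformation_assoc:
  assumes "\<forall>j. 0 < v j"
  shows "conv (max_deformation v) (max_deformation v a b) (pmass c)
       = conv (max_deformation v) (pmass a) (max_deformation v b c)"
proof -
  note commute = conv_pmass_commute[of "max_deformation v", OF max_deformation_commute]
  note above = conv_square_measure_pmass_above[OF assms]
  note below = conv_square_measure_pmass_below[OF assms]
  consider "a = b" "b = c" | "a = b" "b \<noteq> c" | "a \<noteq> b" "b = c" | "a \<noteq> b" "b \<noteq> c"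
    by blast
  then show ?thesis
  proof cases
    case 1
    then show ?thesis by (simp add: max_deformation_def commute)
  next
    case 2
    then show ?thesis
      by (cases "a < c") (auto simp: max_deformation_def max_def above below)
  next
    case 3
    then show ?thesis
      by (cases "a < b") (auto simp: max_deformation_def max_def above below commute)
  next
    case 4
    then show ?thesis by (auto simp: max_deformation_def max_def)
  qed
qed

lemma max_deformation_diag_zero:
  "v 0 = 1 \<Longrightarrow> max_deformation v n n 0 = 1 / v n"
  by (cases "n = 0") (simp_all add: max_deformation_def square_measure_def)

lemma herm_deformation_max_deformation:
  assumes pos: "\<forall>j. 0 < v j" and v0: "v 0 = 1" and dom: "\<forall>n\<ge>1. (\<Sum>j<n. v j) \<le> v n"
  shows "herm_deformation (max_deformation v)"
proof -
  have "fin_prob (square_measure v n)" if "n \<ge> 1" for n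
  proof -
    have "0 \<le> square_measure v n k" for k
      using pos dom that by (auto simp: square_measure_def less_imp_le)
    moreover have "finite (spt (square_measure v n))"
      using spt_square_measure_subset finite_subset by blast
    moreover have "(\<Sum>k\<in>spt (square_measure v n). square_measure v n k) = 1"
      using sum_spt_superset[OF spt_square_measure_subset finite_atMost, of v n "\<lambda>_. 1"]
        sum_square_measure[of v n] pos
      by simp
    ultimately show ?thesis by (simp add: fin_prob_def)
  qed
  moreover have "0 \<in> spt (square_measure v n)" for n
    using pos v0 by (auto simp: spt_def square_measure_def less_imp_neq[symmetric])
  ultimately show ?thesis
    unfolding herm_deformation_def
    using max_deformation_assoc[OF pos] max_deformation_commute square_measure_zero[of v, OF v0]
    by (auto simp: max_deformation_def)
qed

lemma herm_deformation_conv_pmass_zero: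
  assumes D: "herm_deformation D" and "1 \<le> c" and "finite (spt \<mu>)"
  shows "conv D \<mu> (pmass c) 0 = \<mu> c * D c c 0"
proof -
  have "conv D \<mu> (pmass c) 0 = (\<Sum>i\<in>spt \<mu>. if i = c then \<mu> c * D c c 0 else 0)"
    unfolding conv_pmass_right
    by (rule sum.cong) (use D \<open>1 \<le> c\<close> in \<open>auto simp: herm_deformation_def pmass_def\<close>)
  then show ?thesis using assms(3) by (simp add: spt_def)
qed

lemma herm_deformation_square_mass:
  assumes D: "herm_deformation D" and "1 \<le> n" "1 \<le> c" "c \<noteq> n"
  shows "D n n c * D c c 0 = (if c < n then D n n 0 else 0)"
proof -
  have fin: "finite (spt (D n n))"
    using D \<open>1 \<le> n\<close> by (simp add: herm_deformation_def fin_prob_def)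
  have "D n n c * D c c 0 = conv D (pmass n) (D n c) 0"
    using D herm_deformation_conv_pmass_zero[OF D \<open>1 \<le> c\<close> fin]
    by (simp add: herm_deformation_def)
  also have "\<dots> = D n (max n c) 0"
    using D \<open>c \<noteq> n\<close> by (simp add: herm_deformation_def max.commute)
  also have "\<dots> = (if c < n then D n n 0 else 0)"
    using D \<open>c \<noteq> n\<close> \<open>1 \<le> c\<close> by (auto simp: herm_deformation_def max_def pmass_def)
  finally show ?thesis .
qed

lemma herm_deformation_unique:
  assumes D: "herm_deformation D" and diag: "\<forall>n. D n n 0 = 1 / v n"
    and pos: "\<forall>j. 0 < v j" and v0: "v 0 = 1"
  shows "D = max_deformation v"
proof -
  have square: "D n n = square_measure v n" if n: "n \<ge> 1" for n
  proof -
    have above: "D n n c = 0" if "c > n" for c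
      using herm_deformation_square_mass[OF D n, of c] that n diag pos
      by (simp add: less_imp_neq[symmetric])
    have below: "D n n c = v c / v n" if "c < n" for c
    proof (cases "c = 0")
      case False
      then show ?thesis
        using herm_deformation_square_mass[OF D n, of c] that diag pos
        by (simp add: field_simps less_imp_neq[symmetric])
    qed (use diag v0 in simp)
    have "spt (D n n) \<subseteq> {..n}"
      using above by (auto simp: spt_def not_le[symmetric])
    then have "(\<Sum>k\<le>n. D n n k) = 1"
      using D n sum_spt_superset[of "D n n" "{..n}" "\<lambda>_. 1"]
      by (simp add: herm_deformation_def fin_prob_def)
    moreover have "(\<Sum>k<n. D n n k) = (\<Sum>k<n. v k) / v n"
      unfolding sum_divide_distrib by (rule sum.cong) (auto simp: below)
    ultimately have "D n n n = (v n - (\<Sum>k<n. v k)) / v n"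
      using pos by (simp add: lessThan_Suc_atMost[symmetric] field_simps less_imp_neq[symmetric])
    then show ?thesis by (auto simp: fun_eq_iff square_measure_def below above)
  qed
  show ?thesis
  proof (intro ext)
    fix m n k
    show "D m n k = max_deformation v m n k"
    proof (cases "m = n \<and> n \<ge> 1")
      case False
      then have "m \<noteq> n \<or> m = 0 \<and> n = 0" by auto
      then show ?thesis
        using D square_measure_zero[of v, OF v0] by (auto simp: herm_deformation_def max_deformation_def)
    qed (simp add: square max_deformation_def)
  qed
qed

lemma haar_max_deformation: "v 0 = 1 \<Longrightarrow> haar (max_deformation v) n = v n"
  by (simp add: haar_def max_deformation_diag_zero)

lemma haar_set_max_deformation:
  "v 0 = 1 \<Longrightarrow> haar_set (max_deformation v) {k. k < n} = (\<Sum>j<n. v j)"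
  by (simp add: haar_set_def lessThan_def[symmetric] haar_max_deformation)

theorem corollary3p4:
  fixes v :: "nat \<Rightarrow> real"
  assumes v_ge1: "\<forall>j. 1 \<le> v j"
    and v0: "v 0 = 1"
    and v_dom: "\<forall>n\<ge>1. (\<Sum>j<n. v j) \<le> v n"
  shows "(\<exists>!D. herm_deformation D \<and> (\<forall>n. D n n 0 = 1 / v n)) \<and>
    (\<forall>D. herm_deformation D \<and> (\<forall>n. D n n 0 = 1 / v n) \<longrightarrow>
      (\<forall>n. haar D n = v n) \<and>
      (\<forall>n\<ge>1. haar D n - haar_set D {k. k < n} = v n - (\<Sum>j<n. v j)) \<and>
      (\<forall>n\<ge>1. haar_set D {k. k < n} \<le> haar D n) \<and>
      (\<forall>n\<ge>1. (\<forall>m<n. D n n m = haar D m / haar D n) \<and>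
               D n n n = (haar D n - haar_set D {k. k < n}) / haar D n \<and>
               (\<forall>m>n. D n n m = 0)) \<and>
      (\<forall>n\<ge>1. (haar D n = haar_set D {k. k < n} \<longrightarrow> spt (D n n) = {k. k < n}) \<and>
               (haar D n > haar_set D {k. k < n} \<longrightarrow> spt (D n n) = {k. k < n} \<union> {n})))"
proof -
  have pos: "\<forall>j. 0 < v j" using v_ge1 by (auto intro: less_le_trans[OF zero_less_one])
  have unique: "herm_deformation D \<and> (\<forall>n. D n n 0 = 1 / v n) \<longleftrightarrow> D = max_deformation v" for D
    using herm_deformation_unique[OF _ _ pos v0] herm_deformation_max_deformation[OF pos v0 v_dom]
      max_deformation_diag_zero[where v = v, OF v0] by blast
  show ?thesis
    unfolding unique
    using v_dom spt_square_measure[OF pos]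
    by (auto simp: haar_max_deformation[of v, OF v0] haar_set_max_deformation[of v, OF v0]
        max_deformation_def square_measure_def)
qed

end
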